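(* There are no rational numbers (in particular, no integers) $x_1,x_2,x_3,d_1,d_2,d_3,L$ with $x_1,x_2,x_3,d_1,d_2,d_3>0$ such that $\operatorname{rank}N\le 2$, $\operatorname{rank}N_1=2$, $\operatorname{rank}N_2=2$, and $\tilde p_2=\tilde p_3=\dots=\tilde p_8=0$. Likewise there are no such positive rational numbers with $\operatorname{rank}N\le 2$, $\operatorname{rank}N_1=\operatorname{rank}N_2=2$ satisfying $p_1=p_2=p_3=0$.
   Context: Define $p_1=x_2^2+x_3^2-d_1^2$, $p_2=x_3^2+x_1^2-d_2^2$, $p_3=x_1^2+x_2^2-d_3^2$, and $\tilde p_2=p_1+p_2+p_3$, $\tilde p_3=d_1p_1+d_2p_2+d_3p_3$, $\tilde p_4=x_1p_1+x_2p_2+x_3p_3$, $\tilde p_5=x_1d_1p_1+x_2d_2p_2+x_3d_3p_3$, $\tilde p_6=x_1^2p_1+x_2^2p_2+x_3^2p_3$, $\tilde p_7=d_1^2p_1+d_2^2p_2+d_3^2p_3$, $\tilde p_8=x_1^2d_1^2p_1+x_2^2d_2^2p_2+x_3^2d_3^2p_3$. $N$ is the $3\times 7$ matrix whose $i$-th row is $(1,\ d_i,\ x_i,\ x_id_i,\ x_i^2,\ d_i^2,\ x_i^2d_i^2)$; $N_1$ is the $3\times 2$ matrix with rows $(1,d_i)$; $N_2$ is the $3\times 2$ matrix with rows $(1,x_i)$, $i=1,2,3$. Ranks are over $\mathbb{Q}$. *)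

theory Defs
  imports "Jordan_Normal_Form.DL_Rank"
begin

definition p1 :: "rat \<Rightarrow> rat \<Rightarrow> rat \<Rightarrow> rat \<Rightarrow> rat \<Rightarrow> rat \<Rightarrow> rat" where
  "p1 x1 x2 x3 d1 d2 d3 = x2^2 + x3^2 - d1^2"
definition p2 :: "rat \<Rightarrow> rat \<Rightarrow> rat \<Rightarrow> rat \<Rightarrow> rat \<Rightarrow> rat \<Rightarrow> rat" where
  "p2 x1 x2 x3 d1 d2 d3 = x3^2 + x1^2 - d2^2"
definition p3 :: "rat \<Rightarrow> rat \<Rightarrow> rat \<Rightarrow> rat \<Rightarrow> rat \<Rightarrow> rat \<Rightarrow> rat" where
  "p3 x1 x2 x3 d1 d2 d3 = x1^2 + x2^2 - d3^2"

definition pcomb :: "rat \<Rightarrow> rat \<Rightarrow> rat \<Rightarrow> rat \<Rightarrow> rat \<Rightarrow> rat \<Rightarrow> rat \<Rightarrow> rat \<Rightarrow> rat \<Rightarrow> rat" where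
  "pcomb w1 w2 w3 x1 x2 x3 d1 d2 d3 =
     w1 * p1 x1 x2 x3 d1 d2 d3 + w2 * p2 x1 x2 x3 d1 d2 d3 + w3 * p3 x1 x2 x3 d1 d2 d3"

definition pt2 where "pt2 x1 x2 x3 d1 d2 d3 = pcomb 1 1 1 x1 x2 x3 d1 d2 d3"
definition pt3 where "pt3 x1 x2 x3 d1 d2 d3 = pcomb d1 d2 d3 x1 x2 x3 d1 d2 d3"
definition pt4 where "pt4 x1 x2 x3 d1 d2 d3 = pcomb x1 x2 x3 x1 x2 x3 d1 d2 d3"
definition pt5 where "pt5 x1 x2 x3 d1 d2 d3 = pcomb (x1*d1) (x2*d2) (x3*d3) x1 x2 x3 d1 d2 d3"
definition pt6 where "pt6 x1 x2 x3 d1 d2 d3 = pcomb (x1^2) (x2^2) (x3^2) x1 x2 x3 d1 d2 d3"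
definition pt7 where "pt7 x1 x2 x3 d1 d2 d3 = pcomb (d1^2) (d2^2) (d3^2) x1 x2 x3 d1 d2 d3"
definition pt8 where "pt8 x1 x2 x3 d1 d2 d3 =
  pcomb (x1^2*d1^2) (x2^2*d2^2) (x3^2*d3^2) x1 x2 x3 d1 d2 d3"

definition Nrow :: "rat \<Rightarrow> rat \<Rightarrow> rat list" where
  "Nrow x d = [1, d, x, x*d, x^2, d^2, x^2*d^2]"

definition Nmat :: "rat \<Rightarrow> rat \<Rightarrow> rat \<Rightarrow> rat \<Rightarrow> rat \<Rightarrow> rat \<Rightarrow> rat mat" where
  "Nmat x1 x2 x3 d1 d2 d3 = mat_of_rows_list 7 [Nrow x1 d1, Nrow x2 d2, Nrow x3 d3]"
definition N1mat :: "rat \<Rightarrow> rat \<Rightarrow> rat \<Rightarrow> rat mat" where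
  "N1mat d1 d2 d3 = mat_of_rows_list 2 [[1, d1], [1, d2], [1, d3]]"
definition N2mat :: "rat \<Rightarrow> rat \<Rightarrow> rat \<Rightarrow> rat mat" where
  "N2mat x1 x2 x3 = mat_of_rows_list 2 [[1, x1], [1, x2], [1, x3]]"

definition rank3 :: "rat mat \<Rightarrow> nat" where
  "rank3 A = vec_space.rank 3 A"

end

theory Submission imports Defs begin

(*
  A 3-row matrix of rank at most 2 has all its 3x3 minors equal
  to zero.  For N the minor on the columns (1, d, x) and the minor on the
  columns (1, d, d^2) give two polynomial identities; the second factors as
  (d1 - d2)(d2 - d3)(d3 - d1) = 0.  Since rank N1 = 2 the d_i are not all
  equal, so exactly two of them coincide, and then the first identity forces
  the corresponding x_i to coincide as well.  In that situation the equations
  p~2 = p~3 = 0 (which are in particular implied by p1 = p2 = p3 = 0) force the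
  remaining polynomial to vanish, i.e. 2 x^2 = d^2 with x > 0, contradicting
  the irrationality of sqrt 2.
*)

definition det3 :: "'a :: comm_ring_1 vec \<Rightarrow> 'a vec \<Rightarrow> 'a vec \<Rightarrow> 'a" where
  "det3 u v w = u$0 * (v$1*w$2 - v$2*w$1) - u$1 * (v$0*w$2 - v$2*w$0) + u$2 * (v$0*w$1 - v$1*w$0)"

lemma det3_repeated_column:
  "det3 u u w = 0" "det3 u v u = 0" "det3 u v v = 0"
  unfolding det3_def by (simp_all add: algebra_simps)

text \<open>Cramer's rule in its weakest form: the determinant annihilates every
  coefficient of a vanishing linear combination of the columns.\<close>
lemma det3_annihilates_relation:
  fixes u v w :: "'a :: comm_ring_1 vec"
  assumes rel: "\<And>r. r < 3 \<Longrightarrow> u$r * a0 + v$r * a1 + w$r * a2 = 0"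
  shows "det3 u v w * a0 = 0" "det3 u v w * a1 = 0" "det3 u v w * a2 = 0"
proof -
  define E where "E r = u$r * a0 + v$r * a1 + w$r * a2" for r
  have E: "E 0 = 0" "E 1 = 0" "E 2 = 0" using rel unfolding E_def by simp_all
  have "det3 u v w * a0 =
      (v$1*w$2 - v$2*w$1) * E 0 - (v$0*w$2 - v$2*w$0) * E 1 + (v$0*w$1 - v$1*w$0) * E 2"
    unfolding det3_def E_def by (simp add: algebra_simps)
  then show "det3 u v w * a0 = 0" using E by simp
  have "det3 u v w * a1 =
      (u$2*w$1 - u$1*w$2) * E 0 + (u$0*w$2 - u$2*w$0) * E 1 + (u$1*w$0 - u$0*w$1) * E 2"
    unfolding det3_def E_def by (simp add: algebra_simps)
  then show "det3 u v w * a1 = 0" using E by simp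
  have "det3 u v w * a2 =
      (u$1*v$2 - u$2*v$1) * E 0 - (u$0*v$2 - u$2*v$0) * E 1 + (u$0*v$1 - u$1*v$0) * E 2"
    unfolding det3_def E_def by (simp add: algebra_simps)
  then show "det3 u v w * a2 = 0" using E by simp
qed

lemma mat_of_cols3_mult_vec:
  "a \<in> carrier_vec 3 \<Longrightarrow> i < 3 \<Longrightarrow>
     (mat_of_cols 3 [u, v, w] *\<^sub>v a) $ i = u$i * a$0 + v$i * a$1 + w$i * a$2"
  by (simp add: mult_mat_vec_def scalar_prod_def mat_of_cols_def eval_nat_numeral)

lemma det3_nonzero_imp_rank_ge_3:
  fixes A :: "'a :: field mat"
  assumes A: "A \<in> carrier_mat 3 nc" and idx: "i < nc" "j < nc" "k < nc"
    and det: "det3 (col A i) (col A j) (col A k) \<noteq> 0"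
  shows "vec_space.rank 3 A \<ge> 3"
proof -
  let ?u = "col A i" and ?v = "col A j" and ?w = "col A k"
  define B where "B = mat_of_cols 3 [?u, ?v, ?w]"
  have B: "B \<in> carrier_mat 3 3" unfolding B_def mat_of_cols_def by auto
  have cols_B: "cols B = [?u, ?v, ?w]" unfolding B_def using A idx by (simp add: cols_mat_of_cols)
  have distinct: "distinct [?u, ?v, ?w]" using det by (auto simp: det3_repeated_column)
  have indep: "\<not> module.lin_dep class_ring (module_vec TYPE('a) 3) (set (cols B))"
  proof
    assume "module.lin_dep class_ring (module_vec TYPE('a) 3) (set (cols B))"
    then obtain a where a: "a \<in> carrier_vec 3" "a \<noteq> 0\<^sub>v 3" "B *\<^sub>v a = 0\<^sub>v 3"
      using vec_space.lin_depE[OF B] distinct cols_B by metis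
    have "?u$r * a$0 + ?v$r * a$1 + ?w$r * a$2 = 0" if "r < 3" for r
      using arg_cong[OF a(3), of "\<lambda>x. x $ r"] mat_of_cols3_mult_vec[OF a(1) that] that
      unfolding B_def by simp
    from det3_annihilates_relation[OF this] det have "a$0 = 0" "a$1 = 0" "a$2 = 0" by auto
    then have "a = 0\<^sub>v 3" using a(1) by (auto intro!: eq_vecI simp: less_Suc_eq numeral_3_eq_3 numeral_2_eq_2)
    then show False using a(2) by simp
  qed
  have "set (cols B) \<subseteq> set (cols A)" using cols_B A idx by (auto simp: cols_def)
  from vec_space.rank_ge_card_indpt[OF A this indep]
  show ?thesis using cols_B distinct by (simp add: distinct_card)
qed

corollary rank_le_2_minor_vanishes:
  fixes A :: "'a :: field mat"
  assumes "A \<in> carrier_mat 3 nc" "vec_space.rank 3 A \<le> 2" "i < nc" "j < nc" "k < nc"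
  shows "det3 (col A i) (col A j) (col A k) = 0"
  using det3_nonzero_imp_rank_ge_3[of A nc i j k] assms by linarith

lemma Nmat_carrier: "Nmat x1 x2 x3 d1 d2 d3 \<in> carrier_mat 3 7"
  unfolding Nmat_def mat_of_rows_list_def by (simp add: carrier_matI)

text \<open>The two minors of N used in the proof: columns (1, d, x) and (1, d, d^2).\<close>
lemma Nmat_minors_vanish:
  assumes "rank3 (Nmat x1 x2 x3 d1 d2 d3) \<le> 2"
  shows "(x1 - x2) * (d2 - d3) = (x2 - x3) * (d1 - d2)"
    and "(d1 - d2) * (d2 - d3) * (d3 - d1) = 0"
proof -
  let ?N = "Nmat x1 x2 x3 d1 d2 d3"
  have minor: "det3 (col ?N 0) (col ?N 1) (col ?N k) = 0" if "k < 7" for k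
    using rank_le_2_minor_vanishes[OF Nmat_carrier] assms that by (simp add: rank3_def)
  show "(x1 - x2) * (d2 - d3) = (x2 - x3) * (d1 - d2)"
    using minor[of 2] by (simp add: det3_def Nmat_def mat_of_rows_list_def Nrow_def algebra_simps)
  show "(d1 - d2) * (d2 - d3) * (d3 - d1) = 0"
    using minor[of 5]
    by (simp add: det3_def Nmat_def mat_of_rows_list_def Nrow_def power2_eq_square algebra_simps)
qed

text \<open>If all three d_i coincide, every row of N1 equals (1, d1), so its rank is at most 1.\<close>
lemma N1mat_rank_2_imp_not_constant:
  assumes "rank3 (N1mat d1 d2 d3) = 2"
  shows "\<not> (d1 = d2 \<and> d2 = d3)"
proof
  assume const: "d1 = d2 \<and> d2 = d3"
  have "vec_space.rank 3 (N1mat d1 d2 d3) \<le> 1"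
  proof (rule vec_space.rank_le_1_product_entries[where f = "\<lambda>_. 1" and g = "\<lambda>c. if c = 0 then 1 else d1"])
    show "N1mat d1 d2 d3 \<in> carrier_mat 3 2" unfolding N1mat_def mat_of_rows_list_def by (simp add: carrier_matI)
    fix r c assume "r < dim_row (N1mat d1 d2 d3)" "c < dim_col (N1mat d1 d2 d3)"
    then have "r < 3" "c < 2" by (auto simp: N1mat_def mat_of_rows_list_def)
    then show "N1mat d1 d2 d3 $$ (r, c) = 1 * (if c = 0 then 1 else d1)"
      using const by (auto simp: N1mat_def mat_of_rows_list_def less_Suc_eq numeral_3_eq_3)
  qed
  then show False using assms by (simp add: rank3_def)
qed

lemma rank_conditions_imp_collision:
  assumes "rank3 (Nmat x1 x2 x3 d1 d2 d3) \<le> 2" "rank3 (N1mat d1 d2 d3) = 2"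
  shows "(x1 = x2 \<and> d1 = d2 \<and> d1 \<noteq> d3) \<or> (x2 = x3 \<and> d2 = d3 \<and> d2 \<noteq> d1)
       \<or> (x1 = x3 \<and> d1 = d3 \<and> d1 \<noteq> d2)"
proof -
  note x_minor = Nmat_minors_vanish(1)[OF assms(1)]
  have not_const: "\<not> (d1 = d2 \<and> d2 = d3)" by (rule N1mat_rank_2_imp_not_constant[OF assms(2)])
  have "d1 = d2 \<or> d2 = d3 \<or> d3 = d1" using Nmat_minors_vanish(2)[OF assms(1)] by auto
  then show ?thesis
  proof (elim disjE)
    assume "d1 = d2"
    then show ?thesis using not_const x_minor by auto
  next
    assume "d2 = d3"
    then show ?thesis using not_const x_minor by auto
  next
    assume "d3 = d1"
    then have "(x1 - x3) * (d2 - d1) = 0" using x_minor by (simp add: algebra_simps)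
    then show ?thesis using not_const \<open>d3 = d1\<close> by auto
  qed
qed

lemma rat_square_neq_2: "(r :: rat)^2 \<noteq> 2"
proof
  assume r2: "r^2 = 2"
  obtain a b where ab: "quotient_of r = (a, b)" by (cases "quotient_of r")
  have b: "b > 0" and coprime: "coprime a b" and r: "r = of_int a / of_int b"
    using ab quotient_of_denom_pos quotient_of_coprime quotient_of_div by blast+
  have "(of_int (a^2) :: rat) = of_int (2 * b^2)" using r2 r b by (simp add: field_simps power_divide)
  then have ab2: "a^2 = 2 * b^2" by linarith
  then obtain k where "a = 2 * k" by (metis even_mult_iff even_numeral evenE power2_eq_square)
  with ab2 have "b^2 = 2 * k^2" by (simp add: power_mult_distrib)
  then have "even (b^2)" by simp
  then have "even b" "even a" using \<open>a = 2 * k\<close> by simp_all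
  then show False using coprime_common_divisor[OF coprime, of 2] by auto
qed

text \<open>Suppose two of the pairs (x_i, d_i) both equal (x, e)
  and the third d equals f \<noteq> e; let s be the sum of the two corresponding p_i, so
  that the remaining one is 2 x^2 - f^2.  Then p~2 = 0 and p~3 = 0 are the two
  hypotheses below, and they are contradictory.\<close>
lemma collision_contradiction:
  fixes x e f s :: rat
  assumes "x > 0" "e \<noteq> f" "s + (2*x^2 - f^2) = 0" "e*s + f*(2*x^2 - f^2) = 0"
  shows False
proof -
  have "(f - e) * (2*x^2 - f^2) = 0"
  proof -
    have "(f - e) * (2*x^2 - f^2) = (e*s + f*(2*x^2 - f^2)) - e * (s + (2*x^2 - f^2))"
      by (simp add: algebra_simps)
    then show ?thesis using assms(3,4) by simp
  qed
  then have "f^2 = 2 * x^2" using assms(2) by simp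
  then have "(f / x)^2 = 2" using assms(1) by (simp add: power_divide)
  then show False using rat_square_neq_2 by blast
qed

lemma no_solution:
  assumes x_pos: "x1 > 0" "x2 > 0" "x3 > 0"
    and ranks: "rank3 (Nmat x1 x2 x3 d1 d2 d3) \<le> 2" "rank3 (N1mat d1 d2 d3) = 2"
    and "pt2 x1 x2 x3 d1 d2 d3 = 0" "pt3 x1 x2 x3 d1 d2 d3 = 0"
  shows False
proof -
  define P1 P2 P3 where "P1 = p1 x1 x2 x3 d1 d2 d3" "P2 = p2 x1 x2 x3 d1 d2 d3" "P3 = p3 x1 x2 x3 d1 d2 d3"
  have sum: "P1 + P2 + P3 = 0" and weighted: "d1*P1 + d2*P2 + d3*P3 = 0"
    using assms(6,7) by (simp_all add: P1_P2_P3_def pt2_def pt3_def pcomb_def)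
  from rank_conditions_imp_collision[OF ranks] show False
  proof (elim disjE conjE)
    assume "x1 = x2" "d1 = d2" "d1 \<noteq> d3"
    then show False using collision_contradiction[of x1 d1 d3 "P1 + P2"] x_pos sum weighted
      by (simp add: P1_P2_P3_def p3_def algebra_simps)
  next
    assume "x2 = x3" "d2 = d3" "d2 \<noteq> d1"
    then show False using collision_contradiction[of x2 d2 d1 "P2 + P3"] x_pos sum weighted
      by (simp add: P1_P2_P3_def p1_def algebra_simps)
  next
    assume "x1 = x3" "d1 = d3" "d1 \<noteq> d2"
    then show False using collision_contradiction[of x1 d1 d2 "P1 + P3"] x_pos sum weighted
      by (simp add: P1_P2_P3_def p2_def algebra_simps)
  qed
qed

theorem theorem6p1:
  shows "\<not> (\<exists>x1 x2 x3 d1 d2 d3 L :: rat.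
            x1 > 0 \<and> x2 > 0 \<and> x3 > 0 \<and> d1 > 0 \<and> d2 > 0 \<and> d3 > 0 \<and>
            rank3 (Nmat x1 x2 x3 d1 d2 d3) \<le> 2 \<and>
            rank3 (N1mat d1 d2 d3) = 2 \<and> rank3 (N2mat x1 x2 x3) = 2 \<and>
            pt2 x1 x2 x3 d1 d2 d3 = 0 \<and> pt3 x1 x2 x3 d1 d2 d3 = 0 \<and>
            pt4 x1 x2 x3 d1 d2 d3 = 0 \<and> pt5 x1 x2 x3 d1 d2 d3 = 0 \<and>
            pt6 x1 x2 x3 d1 d2 d3 = 0 \<and> pt7 x1 x2 x3 d1 d2 d3 = 0 \<and>
            pt8 x1 x2 x3 d1 d2 d3 = 0)
       \<and> \<not> (\<exists>x1 x2 x3 d1 d2 d3 L :: rat.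
            x1 > 0 \<and> x2 > 0 \<and> x3 > 0 \<and> d1 > 0 \<and> d2 > 0 \<and> d3 > 0 \<and>
            rank3 (Nmat x1 x2 x3 d1 d2 d3) \<le> 2 \<and>
            rank3 (N1mat d1 d2 d3) = 2 \<and> rank3 (N2mat x1 x2 x3) = 2 \<and>
            p1 x1 x2 x3 d1 d2 d3 = 0 \<and> p2 x1 x2 x3 d1 d2 d3 = 0 \<and>
            p3 x1 x2 x3 d1 d2 d3 = 0)"
proof (intro conjI notI; elim exE conjE)
  fix x1 x2 x3 d1 d2 d3 :: rat
  assume "x1 > 0" "x2 > 0" "x3 > 0" "rank3 (Nmat x1 x2 x3 d1 d2 d3) \<le> 2" "rank3 (N1mat d1 d2 d3) = 2"
    "pt2 x1 x2 x3 d1 d2 d3 = 0" "pt3 x1 x2 x3 d1 d2 d3 = 0"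
  then show False by (rule no_solution)
next
  fix x1 x2 x3 d1 d2 d3 :: rat
  assume x_pos: "x1 > 0" "x2 > 0" "x3 > 0"
    and ranks: "rank3 (Nmat x1 x2 x3 d1 d2 d3) \<le> 2" "rank3 (N1mat d1 d2 d3) = 2"
    and "p1 x1 x2 x3 d1 d2 d3 = 0" "p2 x1 x2 x3 d1 d2 d3 = 0" "p3 x1 x2 x3 d1 d2 d3 = 0"
  then have "pt2 x1 x2 x3 d1 d2 d3 = 0" "pt3 x1 x2 x3 d1 d2 d3 = 0"
    by (simp_all add: pt2_def pt3_def pcomb_def)
  then show False by (rule no_solution[OF x_pos ranks])
qed

end
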